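(* For every integer $n\ge0$, with the polynomial matrix $M(x)$ defined below, $\operatorname{Pf}M(x)=(-1)^n\operatorname{Pf}M(-2n-1-x)$ as polynomials in $x$.
   Context: For an indeterminate $y$ and integer $k\ge0$, $\binom yk=y(y-1)\cdots(y-k+1)/k!$. For integers $i,j\ge1$ define the polynomials $R_{i,j}(x)=\sum_{\ell=0}^{i-1}\frac{j-i}{i}\binom{j-1}{i-1-\ell}\binom{\ell+j}{\ell}\binom{2x+2n+2}{\ell+j+1}$ (for integers $x\ge0$ this equals $\sum_{t=1}^{2x+2n+1}\frac{j-i}{t}\binom ti\binom tj$) and $T_{i,j}(x)=\binom{2x+2n+1}{i}\big(\binom{x+n}{j}+\binom{x+n+1}{j}\big)$. $M(x)$ is the $(2n+2)\times(2n+2)$ skew-symmetric matrix with $M_{i,j}(x)=R_{i,j}(x)+T_{i,j}(x)-T_{j,i}(x)$ for $1\le i,j\le 2n+1$ and $M_{i,2n+2}(x)=\binom{x+n}{i-1}$ for $1\le i\le 2n+1$. *)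

theory Defs
  imports Complex_Main "HOL-Combinatorics.Permutations"
begin

definition pfaffian :: "nat \<Rightarrow> (nat \<Rightarrow> nat \<Rightarrow> real) \<Rightarrow> real" where
  "pfaffian m A =
     (\<Sum>s | s permutes {1..2*m}. of_int (sign s) * (\<Prod>i=1..m. A (s (2*i-1)) (s (2*i))))
       / (2 ^ m * fact m)"

definition Rpol :: "nat \<Rightarrow> nat \<Rightarrow> nat \<Rightarrow> real \<Rightarrow> real" where
  "Rpol n i j x = (\<Sum>l=0..i-1. ((real j - real i) / real i) * real ((j-1) choose (i-1-l))
       * real ((l+j) choose l) * ((2*x + 2*real n + 2) gchoose (l+j+1)))"

definition Tpol :: "nat \<Rightarrow> nat \<Rightarrow> nat \<Rightarrow> real \<Rightarrow> real" where
  "Tpol n i j x = ((2*x + 2*real n + 1) gchoose i) *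
       (((x + real n) gchoose j) + ((x + real n + 1) gchoose j))"

definition Mmat :: "nat \<Rightarrow> real \<Rightarrow> nat \<Rightarrow> nat \<Rightarrow> real" where
  "Mmat n x i j =
     (if i \<le> 2*n+1 \<and> j \<le> 2*n+1 then Rpol n i j x + Tpol n i j x - Tpol n j i x
      else if i \<le> 2*n+1 \<and> j = 2*n+2 then (x + real n) gchoose (i-1)
      else if i = 2*n+2 \<and> j \<le> 2*n+1 then - ((x + real n) gchoose (j-1))
      else 0)"

end

theory Submission
  imports Defs "HOL-Analysis.Weierstrass_Theorems"
begin

text \<open>Let \<open>P\<close> be the signed Pascal matrix \<open>P\<^sub>a\<^sub>k = (-1)\<^sup>a\<^sup>-\<^sup>1 (a-1 choose k-1)\<close> on the indices
  \<open>1..2n+1\<close> and \<open>Q = P \<oplus> 1\<close>. Vandermonde's identity gives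
  \<open>\<Sum>\<^sub>k P\<^sub>a\<^sub>k (z choose k-1) = (-z-1 choose a-1)\<close> and \<open>\<Sum>\<^sub>k P\<^sub>a\<^sub>k (w choose k) = -(-w choose a)\<close>,
  from which \<open>M(-2n-1-x) = Q M(x) Q\<^sup>T\<close> follows entrywise. For the \<open>R\<close>-block, both sides of
  \<open>R(2-w) = P R(w) P\<^sup>T\<close> are polynomials in \<open>w = 2x+2n+2\<close> with the same forward difference that
  vanish at \<open>w = 1\<close>. Finally \<open>Pf(Q A Q\<^sup>T) = det Q \<cdot> Pf A\<close>, and \<open>Q\<close> is triangular with diagonal
  \<open>1, -1, 1, \<dots>, 1, 1\<close>, so \<open>det Q = (-1)\<^sup>n\<close>.\<close>

section \<open>Pfaffians under congruence\<close>

lemma prod_atLeastAtMost_in_pairs: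
  fixes \<phi> :: "nat \<Rightarrow> 'a::comm_monoid_mult"
  shows "(\<Prod>t=1..2*m. \<phi> t) = (\<Prod>i=1..m. \<phi> (2*i-1) * \<phi> (2*i))"
proof (induction m)
  case (Suc m)
  have "{1..2*Suc m} = insert (2*m+2) (insert (2*m+1) {1..2*m})" by auto
  then show ?case using Suc by (simp add: algebra_simps)
qed simp

lemma bij_betw_pair_blocks:
  fixes m :: nat
  shows "bij_betw (\<lambda>g. \<lambda>i\<in>{1..m}. (g (2*i-1), g (2*i)))
     (PiE {1..2*m} (\<lambda>_. I)) (PiE {1..m} (\<lambda>_. I \<times> I))"
proof -
  have split: "odd t \<and> t = 2 * ((t+1) div 2) - 1 \<and> (t+1) div 2 \<in> {1..m}
      \<or> even t \<and> t = 2 * (t div 2) \<and> t div 2 \<in> {1..m}"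
    if "t \<in> {1..2*m}" for t
    using that by (cases "even t") (auto elim!: evenE oddE)
  show ?thesis
  proof (rule bij_betw_byWitness[where f' =
        "\<lambda>G. \<lambda>t\<in>{1..2*m}. if odd t then fst (G ((t+1) div 2)) else snd (G (t div 2))"], goal_cases)
    case 1 show ?case using split by (fastforce simp: PiE_def extensional_def fun_eq_iff)
  next
    case 2 show ?case by (auto simp: PiE_def extensional_def fun_eq_iff)
  next
    case 3 show ?case
    proof (rule image_subsetI, rule PiE_I)
      fix g i assume g: "g \<in> PiE {1..2*m} (\<lambda>_. I)" and i: "i \<in> {1..m}"
      then have "2*i-1 \<in> {1..2*m}" "2*i \<in> {1..2*m}" by auto
      then show "(\<lambda>i\<in>{1..m}. (g (2*i-1), g (2*i))) i \<in> I \<times> I" using g i by auto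
    qed auto
  next
    case 4 show ?case
    proof (rule image_subsetI, rule PiE_I)
      fix G t assume G: "G \<in> PiE {1..m} (\<lambda>_. I \<times> I)" and t: "t \<in> {1..2*m}"
      have "fst (G k) \<in> I" "snd (G k) \<in> I" if "k \<in> {1..m}" for k
        using G that by (auto simp: PiE_iff mem_Times_iff)
      then show "(\<lambda>t\<in>{1..2*m}. if odd t then fst (G ((t+1) div 2)) else snd (G (t div 2))) t \<in> I"
        using split[OF t] t by auto
    qed auto
  qed
qed

lemma prod_sum_sum_eq_sum_PiE_pairs:
  fixes F :: "nat \<Rightarrow> 'b \<Rightarrow> 'b \<Rightarrow> 'a::comm_semiring_1"
  assumes "finite I"
  shows "(\<Prod>i=1..m. \<Sum>k\<in>I. \<Sum>l\<in>I. F i k l)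
       = (\<Sum>g\<in>PiE {1..2*m} (\<lambda>_. I). \<Prod>i=1..m. F i (g (2*i-1)) (g (2*i)))"
proof -
  have "(\<Prod>i=1..m. \<Sum>k\<in>I. \<Sum>l\<in>I. F i k l) = (\<Prod>i=1..m. \<Sum>kl\<in>I \<times> I. F i (fst kl) (snd kl))"
    by (simp add: sum.cartesian_product case_prod_beta)
  also have "\<dots> = (\<Sum>G\<in>PiE {1..m} (\<lambda>_. I \<times> I). \<Prod>i=1..m. F i (fst (G i)) (snd (G i)))"
    by (rule prod_sum_PiE) (use assms in auto)
  also have "\<dots> = (\<Sum>g\<in>PiE {1..2*m} (\<lambda>_. I). \<Prod>i=1..m. F i (g (2*i-1)) (g (2*i)))"
    by (subst sum.reindex_bij_betw[OF bij_betw_pair_blocks, symmetric]) (auto intro!: sum.cong prod.cong)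
  finally show ?thesis .
qed

text \<open>The Leibniz expansion of the determinant of the \<open>I \<times> I\<close> matrix whose column \<open>t\<close> is column
  \<open>g t\<close> of \<open>Q\<close>; \<open>det_cols I Q id\<close> is the determinant of \<open>Q\<close> restricted to \<open>I\<close>.\<close>

definition det_cols :: "'i set \<Rightarrow> ('i \<Rightarrow> 'i \<Rightarrow> real) \<Rightarrow> ('i \<Rightarrow> 'i) \<Rightarrow> real" where
  "det_cols I Q g = (\<Sum>s | s permutes I. of_int (sign s) * (\<Prod>t\<in>I. Q (s t) (g t)))"

lemma det_cols_eq_0_if_not_inj:
  assumes fin: "finite I" and "a \<in> I" "b \<in> I" "a \<noteq> b" "g a = g b"
  shows "det_cols I Q g = 0"
proof -
  let ?\<tau> = "Transposition.transpose a b"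
  have \<tau>: "?\<tau> permutes I" using assms by (intro permutes_swap_id)
  have g\<tau>: "g (?\<tau> t) = g t" for t using assms by (auto simp: Transposition.transpose_def)
  define f where "f s = of_int (sign s) * (\<Prod>t\<in>I. Q (s t) (g t))" for s
  have flip: "f (s \<circ> ?\<tau>) = - f s" if s: "s permutes I" for s
  proof -
    have "permutation s" "permutation ?\<tau>" using s \<tau> fin permutation_permutes by blast+
    then have "sign (s \<circ> ?\<tau>) = - sign s"
      using \<open>a \<noteq> b\<close> by (simp add: sign_compose sign_swap_id)
    moreover have "(\<Prod>t\<in>I. Q ((s \<circ> ?\<tau>) t) (g t)) = (\<Prod>t\<in>I. Q (s t) (g t))"
      using prod.permute[OF \<tau>, of "\<lambda>t. Q (s t) (g t)"] by (simp add: comp_def g\<tau>)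
    ultimately show ?thesis by (simp add: f_def)
  qed
  have "(\<Sum>s | s permutes I. f s) = (\<Sum>s | s permutes I. f (s \<circ> ?\<tau>))"
    by (rule sum_permutations_compose_right[OF \<tau>])
  also have "\<dots> = (\<Sum>s | s permutes I. - f s)"
    using flip by (intro sum.cong) auto
  also have "\<dots> = - (\<Sum>s | s permutes I. f s)"
    by (rule sum_negf)
  finally have "(\<Sum>s | s permutes I. f s) = - (\<Sum>s | s permutes I. f s)" .
  then show ?thesis by (simp add: det_cols_def f_def)
qed

lemma det_cols_permutes:
  assumes fin: "finite I" and p: "p permutes I"
  shows "det_cols I Q p = of_int (sign p) * det_cols I Q id"
proof -
  have "det_cols I Q p
      = (\<Sum>s | s permutes I. of_int (sign (s \<circ> p)) * (\<Prod>t\<in>I. Q ((s \<circ> p) t) (p t)))"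
    unfolding det_cols_def by (rule sum_permutations_compose_right[OF p])
  also have "\<dots> = (\<Sum>s | s permutes I. of_int (sign p) * (of_int (sign s) * (\<Prod>t\<in>I. Q (s t) t)))"
  proof (rule sum.cong[OF refl])
    fix s assume "s \<in> {s. s permutes I}"
    then have "permutation s" "permutation p" using p fin permutation_permutes by auto
    then have "sign (s \<circ> p) = sign s * sign p" by (rule sign_compose)
    moreover have "(\<Prod>t\<in>I. Q ((s \<circ> p) t) (p t)) = (\<Prod>t\<in>I. Q (s t) t)"
      using prod.permute[OF p, of "\<lambda>t. Q (s t) t"] by (simp add: comp_def)
    ultimately show "of_int (sign (s \<circ> p)) * (\<Prod>t\<in>I. Q ((s \<circ> p) t) (p t))
        = of_int (sign p) * (of_int (sign s) * (\<Prod>t\<in>I. Q (s t) t))" by simp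
  qed
  finally show ?thesis by (simp add: det_cols_def sum_distrib_left)
qed

lemma det_cols_id_lower_triangular:
  fixes Q :: "'i::wellorder \<Rightarrow> 'i \<Rightarrow> real"
  assumes fin: "finite I" and upper: "\<And>a b. a \<in> I \<Longrightarrow> b \<in> I \<Longrightarrow> a < b \<Longrightarrow> Q a b = 0"
  shows "det_cols I Q id = (\<Prod>t\<in>I. Q t t)"
proof -
  have "of_int (sign s) * (\<Prod>t\<in>I. Q (s t) t) = 0" if s: "s permutes I" "s \<noteq> id" for s
  proof -
    obtain t where t: "t \<in> I" "s t < t" using permutes_natset_ge[OF s(1)] s(2) by (meson not_le)
    then have "Q (s t) t = 0" using upper permutes_in_image[OF s(1)] by blast
    then have "(\<Prod>t\<in>I. Q (s t) t) = 0" using fin t(1) by (meson prod_zero)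
    then show ?thesis by simp
  qed
  then have "det_cols I Q id = (\<Sum>s\<in>{id}. of_int (sign s) * (\<Prod>t\<in>I. Q (s t) (id t)))"
    unfolding det_cols_def
    by (intro sum.mono_neutral_right) (auto simp: fin finite_permutations permutes_id)
  then show ?thesis by simp
qed

lemma sum_PiE_eq_sum_permutes:
  assumes fin: "finite I"
    and not_inj: "\<And>g. g \<in> PiE I (\<lambda>_. I) \<Longrightarrow> \<not> inj_on g I \<Longrightarrow> h g = 0"
    and local: "\<And>g g'. (\<And>t. t \<in> I \<Longrightarrow> g t = g' t) \<Longrightarrow> h g = h g'"
  shows "(\<Sum>g\<in>PiE I (\<lambda>_. I). h g) = (\<Sum>p | p permutes I. h p)"
proof -
  have bij: "bij_betw (\<lambda>p. restrict p I) {p. p permutes I} {g \<in> PiE I (\<lambda>_. I). inj_on g I}"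
  proof (rule bij_betw_byWitness[where f' = "\<lambda>g t. if t \<in> I then g t else t"], goal_cases)
    case 1 show ?case by (auto simp: fun_eq_iff permutes_not_in)
  next
    case 2 show ?case by (auto simp: fun_eq_iff PiE_def extensional_def)
  next
    case 3 show ?case
    proof (rule image_subsetI)
      fix p assume "p \<in> {p. p permutes I}"
      then have p: "p permutes I" by simp
      have "inj_on (restrict p I) I" using permutes_inj_on[OF p] by (auto simp: inj_on_def)
      then show "restrict p I \<in> {g \<in> PiE I (\<lambda>_. I). inj_on g I}"
        using p by (auto simp: permutes_in_image)
    qed
  next
    case 4 show ?case
    proof (rule image_subsetI, simp, rule inj_imp_permutes[OF _ fin])
      fix g assume "g \<in> PiE I (\<lambda>_. I) \<and> inj_on g I"
      then show "inj_on (\<lambda>t. if t \<in> I then g t else t) I" by (auto simp: inj_on_def)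
    qed (auto simp: PiE_iff)
  qed
  have "(\<Sum>g\<in>PiE I (\<lambda>_. I). h g) = (\<Sum>g\<in>{g \<in> PiE I (\<lambda>_. I). inj_on g I}. h g)"
    by (rule sum.mono_neutral_right) (use fin not_inj in \<open>auto simp: finite_PiE\<close>)
  also have "\<dots> = (\<Sum>p | p permutes I. h (restrict p I))"
    by (rule sum.reindex_bij_betw[OF bij, symmetric])
  also have "\<dots> = (\<Sum>p | p permutes I. h p)"
    by (intro sum.cong refl local) simp
  finally show ?thesis .
qed

lemma pfaffian_cong:
  assumes "\<And>a b. a \<in> {1..2*m} \<Longrightarrow> b \<in> {1..2*m} \<Longrightarrow> A a b = B a b"
  shows "pfaffian m A = pfaffian m B"
  unfolding pfaffian_def
proof (intro arg_cong2[where f = "(/)"] sum.cong refl arg_cong2[where f = "(*)"] prod.cong)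
  fix s i assume s: "s \<in> {s. s permutes {1..2*m}}" and "i \<in> {1..m}"
  then have "2*i-1 \<in> {1..2*m}" "2*i \<in> {1..2*m}" by auto
  then have "s (2*i-1) \<in> {1..2*m}" "s (2*i) \<in> {1..2*m}"
    using s permutes_in_image[of s "{1..2*m}"] by auto
  then show "A (s (2*i-1)) (s (2*i)) = B (s (2*i-1)) (s (2*i))" by (rule assms)
qed

lemma prod_bilinear_pairs_eq_sum_PiE:
  fixes A Q :: "'i \<Rightarrow> 'i \<Rightarrow> 'a::comm_semiring_1" and m :: nat
  assumes "finite I"
  shows "(\<Prod>i=1..m. \<Sum>k\<in>I. \<Sum>l\<in>I. Q (h (2*i-1)) k * A k l * Q (h (2*i)) l)
       = (\<Sum>g\<in>PiE {1..2*m} (\<lambda>_. I).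
            (\<Prod>i=1..m. A (g (2*i-1)) (g (2*i))) * (\<Prod>t=1..2*m. Q (h t) (g t)))"
proof -
  have "(\<Prod>i=1..m. \<Sum>k\<in>I. \<Sum>l\<in>I. Q (h (2*i-1)) k * A k l * Q (h (2*i)) l)
      = (\<Sum>g\<in>PiE {1..2*m} (\<lambda>_. I).
           \<Prod>i=1..m. Q (h (2*i-1)) (g (2*i-1)) * A (g (2*i-1)) (g (2*i)) * Q (h (2*i)) (g (2*i)))"
    by (rule prod_sum_sum_eq_sum_PiE_pairs[OF assms])
  also have "\<dots> = (\<Sum>g\<in>PiE {1..2*m} (\<lambda>_. I).
      (\<Prod>i=1..m. A (g (2*i-1)) (g (2*i))) * (\<Prod>t=1..2*m. Q (h t) (g t)))"
    unfolding prod_atLeastAtMost_in_pairs by (simp add: prod.distrib ac_simps)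
  finally show ?thesis .
qed

lemma pfaffian_congruence:
  fixes A Q :: "nat \<Rightarrow> nat \<Rightarrow> real"
  shows "pfaffian m (\<lambda>a b. \<Sum>k=1..2*m. \<Sum>l=1..2*m. Q a k * A k l * Q b l)
       = det_cols {1..2*m} Q id * pfaffian m A"
proof -
  define I where "I = {1..2*m}"
  define W where "W g = (\<Prod>i=1..m. A (g (2*i-1)) (g (2*i)))" for g :: "nat \<Rightarrow> nat"
  have fin: "finite I" by (simp add: I_def)
  have expand: "(\<Prod>i=1..m. \<Sum>k\<in>I. \<Sum>l\<in>I. Q (s (2*i-1)) k * A k l * Q (s (2*i)) l)
      = (\<Sum>g\<in>PiE I (\<lambda>_. I). W g * (\<Prod>t\<in>I. Q (s t) (g t)))" for s
    unfolding W_def I_def by (rule prod_bilinear_pairs_eq_sum_PiE) simp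
  have "(\<Sum>s | s permutes I. of_int (sign s)
         * (\<Prod>i=1..m. \<Sum>k\<in>I. \<Sum>l\<in>I. Q (s (2*i-1)) k * A k l * Q (s (2*i)) l))
      = (\<Sum>s | s permutes I. \<Sum>g\<in>PiE I (\<lambda>_. I). W g * (of_int (sign s) * (\<Prod>t\<in>I. Q (s t) (g t))))"
    unfolding expand by (simp add: sum_distrib_left mult.left_commute)
  also have "\<dots> = (\<Sum>g\<in>PiE I (\<lambda>_. I). W g * det_cols I Q g)"
    by (subst sum.swap) (simp add: det_cols_def sum_distrib_left)
  also have "\<dots> = (\<Sum>p | p permutes I. W p * det_cols I Q p)"
  proof (rule sum_PiE_eq_sum_permutes[OF fin])
    fix g :: "nat \<Rightarrow> nat" assume "\<not> inj_on g I"
    then obtain a b where "a \<in> I" "b \<in> I" "a \<noteq> b" "g a = g b" by (auto simp: inj_on_def)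
    then show "W g * det_cols I Q g = 0" by (simp add: det_cols_eq_0_if_not_inj[OF fin])
  next
    fix g g' :: "nat \<Rightarrow> nat" assume agree: "\<And>t. t \<in> I \<Longrightarrow> g t = g' t"
    have "2*i-1 \<in> I" "2*i \<in> I" if "i \<in> {1..m}" for i using that by (auto simp: I_def)
    then have "W g = W g'" unfolding W_def by (intro prod.cong) (auto simp: agree)
    moreover have "det_cols I Q g = det_cols I Q g'"
      unfolding det_cols_def by (intro sum.cong prod.cong refl) (simp_all add: agree)
    ultimately show "W g * det_cols I Q g = W g' * det_cols I Q g'" by simp
  qed
  also have "\<dots> = det_cols I Q id * (\<Sum>p | p permutes I. of_int (sign p) * W p)"
  proof -
    have "W p * det_cols I Q p = det_cols I Q id * (of_int (sign p) * W p)" if "p permutes I" for p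
      using det_cols_permutes[OF fin that] by simp
    then show ?thesis unfolding sum_distrib_left by (intro sum.cong) auto
  qed
  finally show ?thesis by (simp add: pfaffian_def I_def W_def)
qed

section \<open>The signed Pascal matrix\<close>

definition signed_pascal :: "nat \<Rightarrow> nat \<Rightarrow> real" where
  "signed_pascal a k = (-1)^(a-1) * real ((a-1) choose (k-1))"

lemma sum_signed_pascal_gchoose_pred:
  fixes z :: real
  assumes "1 \<le> a" "a \<le> K"
  shows "(\<Sum>k=1..K. signed_pascal a k * (z gchoose (k-1))) = (-z-1) gchoose (a-1)"
proof -
  obtain K' where K: "K = Suc K'" using assms by (cases K) auto
  define m where "m = a - 1"
  have "(\<Sum>k=1..K. real (m choose (k-1)) * (z gchoose (k-1)))
      = (\<Sum>j=0..K'. real (m choose j) * (z gchoose j))"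
    unfolding K One_nat_def sum.shift_bounds_cl_Suc_ivl by simp
  also have "\<dots> = (\<Sum>j=0..m. (z gchoose j) * (of_nat m gchoose (m - j)))"
  proof (rule sum.mono_neutral_cong_right)
    show "real (m choose j) * (z gchoose j) = (z gchoose j) * (of_nat m gchoose (m - j))"
      if "j \<in> {0..m}" for j
      using that binomial_symmetric[of j m] by (simp add: binomial_gbinomial[symmetric])
  qed (use assms K in \<open>auto simp: m_def binomial_eq_0\<close>)
  also have "\<dots> = (z + of_nat m) gchoose m"
    by (rule gbinomial_Vandermonde)
  finally have vandermonde: "(\<Sum>k=1..K. real (m choose (k-1)) * (z gchoose (k-1))) = (z + of_nat m) gchoose m" .
  have "(\<Sum>k=1..K. signed_pascal a k * (z gchoose (k-1)))
      = (-1)^m * (\<Sum>k=1..K. real (m choose (k-1)) * (z gchoose (k-1)))"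
    by (simp add: signed_pascal_def m_def sum_distrib_left mult.assoc)
  also have "\<dots> = (-z-1) gchoose m"
    unfolding vandermonde by (simp add: gbinomial_negated_upper[of "-z-1" m] algebra_simps)
  finally show ?thesis by (simp add: m_def)
qed

lemma sum_signed_pascal_gchoose:
  fixes w :: real
  assumes "1 \<le> a" "a \<le> K"
  shows "(\<Sum>k=1..K. signed_pascal a k * (w gchoose k)) = - ((-w) gchoose a)"
proof -
  define m where "m = a - 1"
  have a: "a = Suc m" using assms by (simp add: m_def)
  have "(\<Sum>k=1..K. real (m choose (k-1)) * (w gchoose k))
      = (\<Sum>k=1..a. (w gchoose k) * (of_nat m gchoose (a - k)))"
  proof (rule sum.mono_neutral_cong_right)
    fix k assume k: "k \<in> {1..a}"
    have "m choose (k-1) = m choose (m - (k-1))" by (rule binomial_symmetric) (use k a in auto)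
    moreover have "m - (k-1) = a - k" using k a by simp
    ultimately show "real (m choose (k-1)) * (w gchoose k) = (w gchoose k) * (of_nat m gchoose (a - k))"
      by (simp add: binomial_gbinomial[symmetric])
  qed (use assms in \<open>auto simp: a binomial_eq_0\<close>)
  also have "\<dots> = (\<Sum>k=0..a. (w gchoose k) * (of_nat m gchoose (a - k)))"
  proof -
    have "(of_nat m gchoose a :: real) = 0" by (simp add: a binomial_gbinomial[symmetric])
    then show ?thesis by (subst sum.atLeast_Suc_atMost[of 0 a]) simp_all
  qed
  also have "\<dots> = (w + of_nat m) gchoose a"
    by (rule gbinomial_Vandermonde)
  finally have vandermonde: "(\<Sum>k=1..K. real (m choose (k-1)) * (w gchoose k)) = (w + of_nat m) gchoose a" .
  have "(\<Sum>k=1..K. signed_pascal a k * (w gchoose k))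
      = (-1)^m * (\<Sum>k=1..K. real (m choose (k-1)) * (w gchoose k))"
    by (simp add: signed_pascal_def m_def sum_distrib_left mult.assoc)
  also have "\<dots> = - ((-w) gchoose a)"
    unfolding vandermonde by (simp add: gbinomial_negated_upper[of "-w" "Suc m"] a algebra_simps)
  finally show ?thesis .
qed

lemma sum_sum_wedge_product:
  fixes p q e f :: "'i \<Rightarrow> 'a::comm_ring"
  shows "(\<Sum>k\<in>A. \<Sum>l\<in>A. p k * (e k * f l - f k * e l) * q l)
       = (\<Sum>k\<in>A. p k * e k) * (\<Sum>l\<in>A. q l * f l) - (\<Sum>k\<in>A. p k * f k) * (\<Sum>l\<in>A. q l * e l)"
  unfolding sum_product sum_subtractf[symmetric] by (intro sum.cong refl) (simp add: algebra_simps)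

section \<open>The \<open>R\<close>-block as a polynomial in \<open>w = 2x + 2n + 2\<close>\<close>

definition rsum :: "nat \<Rightarrow> nat \<Rightarrow> real \<Rightarrow> real" where
  "rsum i j w = (\<Sum>l=0..i-1. ((real j - real i) / real i) * real ((j-1) choose (i-1-l))
       * real ((l+j) choose l) * (w gchoose (l+j+1)))"

lemma Rpol_eq_rsum: "Rpol n i j x = rsum i j (2*x + 2*real n + 2)"
  by (simp add: Rpol_def rsum_def)

lemma gbinomial_mult_gbinomial_pred:
  fixes w :: real
  assumes j: "1 \<le> j"
  shows "(w gchoose j) * ((w - 1) gchoose a)
       = (\<Sum>l=0..a. real ((j-1) choose (a-l)) * real ((l+j) choose l) * (w gchoose (l+j)))"
proof -
  have "(w - 1) gchoose a = ((w - of_nat j) + of_nat (j-1)) gchoose a"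
    using j by (simp add: of_nat_diff)
  also have "\<dots> = (\<Sum>l=0..a. ((w - of_nat j) gchoose l) * (of_nat (j-1) gchoose (a - l)))"
    by (rule gbinomial_Vandermonde[symmetric])
  finally have "(w gchoose j) * ((w - 1) gchoose a)
      = (\<Sum>l=0..a. ((w gchoose j) * ((w - of_nat j) gchoose l)) * (of_nat (j-1) gchoose (a - l)))"
    by (simp add: sum_distrib_left mult.assoc)
  also have "\<dots> = (\<Sum>l=0..a. real ((j-1) choose (a-l)) * real ((l+j) choose l) * (w gchoose (l+j)))"
  proof (rule sum.cong[OF refl])
    fix l
    have "(w gchoose (l+j)) * (of_nat (l+j) gchoose j) = (w gchoose j) * ((w - of_nat j) gchoose l)"
      using gbinomial_trinomial_revision[of j "l+j" w] by simp
    moreover have "(l+j) choose j = (l+j) choose l"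
      using binomial_symmetric[of l "l+j"] by simp
    then have "(of_nat (l+j) gchoose j :: real) = real ((l+j) choose l)"
      by (metis binomial_gbinomial)
    ultimately show "(w gchoose j) * ((w - of_nat j) gchoose l) * (of_nat (j-1) gchoose (a - l))
        = real ((j-1) choose (a-l)) * real ((l+j) choose l) * (w gchoose (l+j))"
      by (simp add: binomial_gbinomial[symmetric] algebra_simps)
  qed
  finally show ?thesis .
qed

lemma rsum_diff:
  fixes w :: real
  assumes i: "1 \<le> i" and j: "1 \<le> j"
  shows "rsum i j (w+1) - rsum i j w
       = (w gchoose i) * ((w-1) gchoose (j-1)) - ((w-1) gchoose (i-1)) * (w gchoose j)"
proof -
  define c where "c l = ((real j - real i) / real i) * real ((j-1) choose (i-1-l)) * real ((l+j) choose l)" for l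
  have pascal: "((w+1) gchoose (l+j+1)) - (w gchoose (l+j+1)) = w gchoose (l+j)" for l
    using gbinomial_Suc_Suc[of w "l+j"] by simp
  have "rsum i j (w+1) - rsum i j w = (\<Sum>l=0..i-1. c l * (w gchoose (l+j)))"
    unfolding rsum_def c_def sum_subtractf[symmetric]
    by (intro sum.cong refl) (simp only: right_diff_distrib[symmetric] pascal)
  also have "\<dots> = ((real j - real i) / real i) * ((w gchoose j) * ((w - 1) gchoose (i-1)))"
    by (simp add: c_def gbinomial_mult_gbinomial_pred[OF j] sum_distrib_left mult.assoc)
  also have "\<dots> = (w gchoose i) * ((w-1) gchoose (j-1)) - ((w-1) gchoose (i-1)) * (w gchoose j)"
    using i j by (simp add: gbinomial_absorption' field_simps)
  finally show ?thesis .
qed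

lemma rsum_at_1:
  assumes "1 \<le> j"
  shows "rsum i j 1 = 0"
proof -
  have "(1::real) gchoose (l+j+1) = 0" for l
    using assms by (simp add: binomial_gbinomial[of 1, simplified, symmetric] binomial_eq_0)
  then show ?thesis by (simp add: rsum_def)
qed

lemma real_polynomial_function_gbinomial: "real_polynomial_function (\<lambda>x. x gchoose k)"
proof -
  obtain p where "real_polynomial_function p" "\<And>x. x gchoose k = p x"
    using real_polynomial_function_gchoose[where r = k] by blast
  then show ?thesis by simp
qed

lemma real_polynomial_function_rsum: "real_polynomial_function (rsum i j)"
  unfolding rsum_def[abs_def]
  by (intro real_polynomial_function_sum real_polynomial_function.intros(2-4)
      real_polynomial_function_gbinomial finite_atLeastAtMost)

lemma real_polynomial_function_periodic_eq_0:
  fixes f :: "real \<Rightarrow> real"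
  assumes poly: "real_polynomial_function f" and periodic: "\<And>x. f (x + 1) = f x" and "f 0 = 0"
  shows "f x = 0"
proof (rule ccontr)
  assume "f x \<noteq> 0"
  obtain c n where f: "f = (\<lambda>x. \<Sum>i\<le>n. c i * x^i)"
    using poly real_polynomial_function_iff_sum by blast
  have "f (real m) = 0" for m
  proof (induction m)
    case (Suc m)
    then show ?case using periodic[of "real m"] by (simp add: add.commute)
  qed (use \<open>f 0 = 0\<close> in simp)
  then have "range real \<subseteq> {x. f x = 0}" by auto
  moreover have "finite {x. f x = 0}"
    using \<open>f x \<noteq> 0\<close> polyfun_finite_roots[of c n] by (auto simp: f)
  ultimately have "finite (range (real :: nat \<Rightarrow> real))" by (rule finite_subset)
  then show False using finite_imageD[OF _ inj_of_nat] by auto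
qed

lemma sum_signed_pascal_rsum_diff:
  fixes w :: real
  assumes a: "1 \<le> a" "a \<le> K" and b: "1 \<le> b" "b \<le> K"
  shows "(\<Sum>k=1..K. \<Sum>l=1..K. signed_pascal a k * rsum k l (w+1) * signed_pascal b l)
       - (\<Sum>k=1..K. \<Sum>l=1..K. signed_pascal a k * rsum k l w * signed_pascal b l)
     = ((-w) gchoose (a-1)) * ((-w) gchoose b) - ((-w) gchoose a) * ((-w) gchoose (b-1))"
proof -
  define e where "e k = w gchoose k" for k
  define f where "f k = (w - 1) gchoose (k - 1)" for k
  have Pe: "(\<Sum>k=1..K. signed_pascal c k * e k) = - ((-w) gchoose c)"
    and Pf: "(\<Sum>k=1..K. signed_pascal c k * f k) = (-w) gchoose (c-1)" if "1 \<le> c" "c \<le> K" for c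
    using sum_signed_pascal_gchoose[OF that, of w] sum_signed_pascal_gchoose_pred[OF that, of "w-1"]
    by (simp_all add: e_def f_def)
  have "(\<Sum>k=1..K. \<Sum>l=1..K. signed_pascal a k * rsum k l (w+1) * signed_pascal b l)
       - (\<Sum>k=1..K. \<Sum>l=1..K. signed_pascal a k * rsum k l w * signed_pascal b l)
      = (\<Sum>k=1..K. \<Sum>l=1..K. signed_pascal a k * (e k * f l - f k * e l) * signed_pascal b l)"
    unfolding sum_subtractf[symmetric] right_diff_distrib[symmetric] left_diff_distrib[symmetric]
    unfolding e_def f_def by (intro sum.cong refl) (simp add: rsum_diff)
  also have "\<dots> = ((-w) gchoose (a-1)) * ((-w) gchoose b) - ((-w) gchoose a) * ((-w) gchoose (b-1))"
    unfolding sum_sum_wedge_product Pe[OF a] Pe[OF b] Pf[OF a] Pf[OF b] by simp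
  finally show ?thesis .
qed

lemma rsum_reflect_diff:
  fixes w :: real
  assumes "1 \<le> a" "1 \<le> b"
  shows "rsum a b (2 - (w+1)) - rsum a b (2 - w)
     = ((-w) gchoose (a-1)) * ((-w) gchoose b) - ((-w) gchoose a) * ((-w) gchoose (b-1))"
proof -
  have pascal: "(1-w) gchoose c = ((-w) gchoose (c-1)) + ((-w) gchoose c)" if "1 \<le> c" for c
    using that gbinomial_Suc_Suc[of "-w" "c-1"] by simp
  have "rsum a b ((1-w) + 1) - rsum a b (1-w)
      = ((1-w) gchoose a) * ((-w) gchoose (b-1)) - ((-w) gchoose (a-1)) * ((1-w) gchoose b)"
    using rsum_diff[OF assms, of "1-w"] by simp
  then show ?thesis
    using assms by (simp add: pascal algebra_simps)
qed

lemma rsum_reflect: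
  fixes w :: real
  assumes a: "1 \<le> a" "a \<le> K" and b: "1 \<le> b" "b \<le> K"
  shows "(\<Sum>k=1..K. \<Sum>l=1..K. signed_pascal a k * rsum k l w * signed_pascal b l) = rsum a b (2 - w)"
proof -
  define E where "E w = (\<Sum>k=1..K. \<Sum>l=1..K. signed_pascal a k * rsum k l w * signed_pascal b l)
      - rsum a b (2 - w)" for w
  have "real_polynomial_function E"
  proof -
    have "real_polynomial_function (rsum a b \<circ> (\<lambda>w. 2 - w))"
      by (intro real_polynomial_function_compose real_polynomial_function_rsum polynomial_function_diff)
        auto
    then show ?thesis
      unfolding E_def[abs_def]
      by (intro real_polynomial_function_diff real_polynomial_function_sum
          real_polynomial_function.intros(2-4) real_polynomial_function_rsum finite_atLeastAtMost)
        (simp_all add: comp_def)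
  qed
  moreover have "E (w + 1) = E w" for w
    using sum_signed_pascal_rsum_diff[OF a b, of w] rsum_reflect_diff[of a b w] a b
    by (simp add: E_def algebra_simps)
  moreover have "E 0 = 0"
  proof -
    have "E 1 = 0" using a b by (simp add: E_def rsum_at_1)
    then show ?thesis using \<open>E (0 + 1) = E 0\<close> by simp
  qed
  ultimately have "E w = 0" by (rule real_polynomial_function_periodic_eq_0)
  then show ?thesis by (simp add: E_def)
qed

section \<open>The congruence \<open>M(-2n-1-x) = Q M(x) Q\<^sup>T\<close>\<close>

definition pascal_block :: "nat \<Rightarrow> nat \<Rightarrow> nat \<Rightarrow> real" where
  "pascal_block n a b =
     (if a \<le> 2*n+1 \<and> b \<le> 2*n+1 then signed_pascal a b else if a = b then 1 else 0)"

lemma prod_alternating_sign: "(\<Prod>t=1..2*n+1. (-1::real)^(t-1)) = (-1)^n"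
proof (induction n)
  case (Suc n)
  have "{1..2*Suc n+1} = insert (2*n+3) (insert (2*n+2) {1..2*n+1})" by auto
  then show ?case using Suc by simp
qed simp

lemma det_pascal_block: "det_cols {1..2*n+2} (pascal_block n) id = (-1)^n"
proof -
  have "det_cols {1..2*n+2} (pascal_block n) id = (\<Prod>t\<in>{1..2*n+2}. pascal_block n t t)"
    by (rule det_cols_id_lower_triangular) (auto simp: pascal_block_def signed_pascal_def binomial_eq_0)
  also have "\<dots> = (\<Prod>t=1..2*n+1. (-1::real)^(t-1))"
  proof -
    have "{1..2*n+2} = insert (2*n+2) {1..2*n+1}" by auto
    then show ?thesis by (simp add: pascal_block_def signed_pascal_def)
  qed
  finally show ?thesis by (simp only: prod_alternating_sign)
qed

lemma sum_pascal_block_low: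
  assumes "1 \<le> a" "a \<le> 2*n+1"
  shows "(\<Sum>k=1..2*n+2. pascal_block n a k * X k) = (\<Sum>k=1..2*n+1. signed_pascal a k * X k)"
proof -
  have "{1..2*n+2} = insert (2*n+2) {1..2*n+1}" by auto
  then show ?thesis using assms by (simp add: pascal_block_def)
qed

lemma sum_pascal_block_top: "(\<Sum>k=1..2*n+2. pascal_block n (2*n+2) k * X k) = X (2*n+2)"
proof -
  have "{1..2*n+2} = insert (2*n+2) {1..2*n+1}" by auto
  then show ?thesis by (simp add: pascal_block_def)
qed

lemma Mmat_reflect_inner:
  fixes x :: real
  assumes a: "1 \<le> a" "a \<le> 2*n+1" and b: "1 \<le> b" "b \<le> 2*n+1"
  shows "(\<Sum>k=1..2*n+1. \<Sum>l=1..2*n+1. signed_pascal a k * Mmat n x k l * signed_pascal b l)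
       = Mmat n (- 2 * real n - 1 - x) a b"
proof -
  define y where "y = x + real n"
  define w where "w = 2*x + 2*real n + 2"
  define u where "u k = (2*y+1) gchoose k" for k
  define v where "v k = (y gchoose k) + ((y+1) gchoose k)" for k
  let ?P = signed_pascal and ?K = "2*n+1" and ?x' = "- 2 * real n - 1 - x"
  have M: "Mmat n x k l = rsum k l w + (u k * v l - v k * u l)" if "k \<le> ?K" "l \<le> ?K" for k l
    using that by (simp add: Mmat_def Rpol_eq_rsum Tpol_def u_def v_def w_def y_def algebra_simps)
  have Pu: "(\<Sum>k=1..?K. ?P c k * u k) = - ((-(2*y+1)) gchoose c)"
    and Pv: "(\<Sum>k=1..?K. ?P c k * v k) = - ((-y) gchoose c) - ((-(y+1)) gchoose c)"
    if "1 \<le> c" "c \<le> ?K" for c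
    using sum_signed_pascal_gchoose[OF that] by (simp_all add: u_def v_def distrib_left sum.distrib)
  have "(\<Sum>k=1..?K. \<Sum>l=1..?K. ?P a k * Mmat n x k l * ?P b l)
      = (\<Sum>k=1..?K. \<Sum>l=1..?K. ?P a k * rsum k l w * ?P b l)
        + (\<Sum>k=1..?K. \<Sum>l=1..?K. ?P a k * (u k * v l - v k * u l) * ?P b l)"
    unfolding sum.distrib[symmetric] by (intro sum.cong refl) (simp add: M algebra_simps)
  also have "\<dots> = rsum a b (2 - w)
        - ((-(2*y+1)) gchoose a) * (- ((-y) gchoose b) - ((-(y+1)) gchoose b))
        + ((-(2*y+1)) gchoose b) * (- ((-y) gchoose a) - ((-(y+1)) gchoose a))"
    unfolding rsum_reflect[OF a b] sum_sum_wedge_product Pu[OF a] Pu[OF b] Pv[OF a] Pv[OF b]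
    by (simp add: algebra_simps)
  also have "\<dots> = Mmat n ?x' a b"
  proof -
    have shift: "?x' + real n = - (y + 1)" "- (y + 1) + 1 = - y"
      "2 * ?x' + 2 * real n + 1 = - (2*y + 1)" "2 * ?x' + 2 * real n + 2 = 2 - w"
      by (simp_all add: y_def w_def algebra_simps)
    have "Mmat n ?x' a b = Rpol n a b ?x' + Tpol n a b ?x' - Tpol n b a ?x'"
      using a b by (simp add: Mmat_def)
    also have "\<dots> = rsum a b (2 - w)
        + ((-(2*y+1)) gchoose a) * (((-(y+1)) gchoose b) + ((-y) gchoose b))
        - ((-(2*y+1)) gchoose b) * (((-(y+1)) gchoose a) + ((-y) gchoose a))"
      by (simp only: Rpol_eq_rsum Tpol_def shift)
    finally show ?thesis by (simp add: algebra_simps)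
  qed
  finally show ?thesis .
qed

lemma Mmat_reflect_last_column:
  fixes x :: real
  assumes a: "1 \<le> a" "a \<le> 2*n+1"
  shows "(\<Sum>k=1..2*n+1. signed_pascal a k * Mmat n x k (2*n+2)) = Mmat n (- 2 * real n - 1 - x) a (2*n+2)"
proof -
  have "(\<Sum>k=1..2*n+1. signed_pascal a k * Mmat n x k (2*n+2))
      = (\<Sum>k=1..2*n+1. signed_pascal a k * ((x + real n) gchoose (k-1)))"
    by (intro sum.cong refl) (simp add: Mmat_def)
  also have "\<dots> = (- (x + real n) - 1) gchoose (a-1)"
    by (rule sum_signed_pascal_gchoose_pred[OF a])
  also have "\<dots> = ((- 2 * real n - 1 - x) + real n) gchoose (a-1)"
    by (rule arg_cong[where f = "\<lambda>z. z gchoose (a-1)"]) linarith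
  also have "\<dots> = Mmat n (- 2 * real n - 1 - x) a (2*n+2)"
    using a by (simp add: Mmat_def)
  finally show ?thesis .
qed

lemma Mmat_last_row: "b \<le> 2*n+1 \<Longrightarrow> Mmat n x (2*n+2) b = - Mmat n x b (2*n+2)"
  by (simp add: Mmat_def)

lemma Mmat_reflect:
  fixes x :: real
  assumes a: "a \<in> {1..2*n+2}" and b: "b \<in> {1..2*n+2}"
  shows "Mmat n (- 2 * real n - 1 - x) a b
       = (\<Sum>k=1..2*n+2. \<Sum>l=1..2*n+2. pascal_block n a k * Mmat n x k l * pascal_block n b l)"
proof -
  let ?Q = "pascal_block n" and ?x' = "- 2 * real n - 1 - x"
  have "(\<Sum>k=1..2*n+2. \<Sum>l=1..2*n+2. ?Q a k * Mmat n x k l * ?Q b l)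
      = (\<Sum>k=1..2*n+2. ?Q a k * (\<Sum>l=1..2*n+2. ?Q b l * Mmat n x k l))"
    by (simp add: sum_distrib_left ac_simps del: sum.cl_ivl_Suc)
  moreover consider "a \<le> 2*n+1" "b \<le> 2*n+1" | "a \<le> 2*n+1" "b = 2*n+2"
    | "a = 2*n+2" "b \<le> 2*n+1" | "a = 2*n+2" "b = 2*n+2"
    using a b by force
  then have "Mmat n ?x' a b = (\<Sum>k=1..2*n+2. ?Q a k * (\<Sum>l=1..2*n+2. ?Q b l * Mmat n x k l))"
  proof cases
    case 1
    then have a': "1 \<le> a" "a \<le> 2*n+1" and b': "1 \<le> b" "b \<le> 2*n+1" using a b by auto
    show ?thesis
      unfolding sum_pascal_block_low[OF a'] sum_pascal_block_low[OF b']
        Mmat_reflect_inner[OF a' b', symmetric]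
      by (simp add: sum_distrib_left ac_simps del: sum.cl_ivl_Suc)
  next
    case 2
    then have a': "1 \<le> a" "a \<le> 2*n+1" using a by auto
    show ?thesis
      unfolding 2(2) sum_pascal_block_top sum_pascal_block_low[OF a']
      by (rule Mmat_reflect_last_column[OF a', symmetric])
  next
    case 3
    then have b': "1 \<le> b" "b \<le> 2*n+1" using b by auto
    have "Mmat n ?x' a b = - (\<Sum>l=1..2*n+1. signed_pascal b l * Mmat n x l (2*n+2))"
      unfolding 3(1) Mmat_last_row[OF b'(2)] Mmat_reflect_last_column[OF b'] ..
    also have "\<dots> = (\<Sum>l=1..2*n+1. signed_pascal b l * Mmat n x (2*n+2) l)"
      unfolding sum_negf[symmetric] by (intro sum.cong refl) (auto simp: Mmat_def)
    finally show ?thesis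
      unfolding 3(1) sum_pascal_block_top sum_pascal_block_low[OF b'] .
  next
    case 4
    then show ?thesis unfolding 4 sum_pascal_block_top by (simp add: Mmat_def)
  qed
  ultimately show ?thesis by simp
qed

theorem mainTheorem10:
  fixes n :: nat
  shows "\<forall>x::real. pfaffian (n+1) (Mmat n x)
           = (-1) ^ n * pfaffian (n+1) (Mmat n (- 2 * real n - 1 - x))"
proof
  fix x :: real
  have dim: "2 * (n+1) = 2*n+2" by simp
  have "pfaffian (n+1) (Mmat n (- 2 * real n - 1 - x))
      = pfaffian (n+1) (\<lambda>a b. \<Sum>k=1..2*(n+1). \<Sum>l=1..2*(n+1).
          pascal_block n a k * Mmat n x k l * pascal_block n b l)"
    unfolding dim by (rule pfaffian_cong) (simp only: dim Mmat_reflect)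
  also have "\<dots> = det_cols {1..2*(n+1)} (pascal_block n) id * pfaffian (n+1) (Mmat n x)"
    by (rule pfaffian_congruence)
  also have "\<dots> = (-1)^n * pfaffian (n+1) (Mmat n x)"
    unfolding dim det_pascal_block ..
  finally show "pfaffian (n+1) (Mmat n x) = (-1)^n * pfaffian (n+1) (Mmat n (- 2 * real n - 1 - x))"
    by simp
qed

end
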